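(* Let $(X,d,\alpha)$ be a computable metric space. Suppose $A$, $B$ and $S$ are subsets of $X$ such that $A\subseteq S$ and $B\subseteq S$ and such that $A$ and $B$ are computable up to $S$. Then $A\cup B$ is computable up to $S$.
   Context: A computable metric space is a triple $(X,d,\alpha)$ where $(X,d)$ is a metric space and $\alpha=(\alpha_i)_{i\in\mathbb N}$ is a sequence with dense range in $(X,d)$ such that $(i,j)\mapsto d(\alpha_i,\alpha_j)$ is a computable function $\mathbb N^2\to\mathbb R$. Fix computable $\sigma:\mathbb N^2\to\mathbb N$, $\eta:\mathbb N\to\mathbb N$ such that $\{(\sigma(j,0),\dots,\sigma(j,\eta(j))):j\in\mathbb N\}$ is the set of all nonempty finite sequences in $\mathbb N$; let $[j]=\{\sigma(j,i):0\le i\le\eta(j)\}$ and $\Lambda_j=\{\alpha_i:i\in[j]\}$. For $A,B\subseteq X$ and $\varepsilon>0$ write $A\prec_\varepsilon B$ if for each $a\in A$ there is $b\in B$ with $d(a,b)<\varepsilon$. For $A\subseteq S\subseteq X$, $A$ is computable up to $S$ if there is a computable $f:\mathbb N\to\mathbb N$ with $A\prec_{2^{-k}}\Lambda_{f(k)}$ and $\Lambda_{f(k)}\prec_{2^{-k}}S$ for all $k\in\mathbb N$. *)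

theory Defs
  imports "HOL-Analysis.Analysis"
begin

text \<open>Functions of variable arity are represented as functions on lists of naturals;
missing arguments are read as 0.  The class of total recursive functions is the least
class containing zero, successor and projections, closed under composition, primitive
recursion and minimization of regular functions.\<close>

definition hd0 :: "nat list \<Rightarrow> nat" where
  "hd0 xs = (case xs of [] \<Rightarrow> 0 | x # _ \<Rightarrow> x)"

definition arg :: "nat \<Rightarrow> nat list \<Rightarrow> nat" where
  "arg i xs = (if i < length xs then xs ! i else 0)"

inductive total_recursive :: "(nat list \<Rightarrow> nat) \<Rightarrow> bool" where
  zero: "total_recursive (\<lambda>_. 0)"
| succ: "total_recursive (\<lambda>xs. Suc (hd0 xs))"
| proj: "total_recursive (arg i)"
| comp: "total_recursive f \<Longrightarrow> (\<forall>g\<in>set gs. total_recursive g) \<Longrightarrow>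
         total_recursive (\<lambda>xs. f (map (\<lambda>g. g xs) gs))"
| prim: "total_recursive f \<Longrightarrow> total_recursive g \<Longrightarrow>
         total_recursive (\<lambda>xs. rec_nat (f (tl xs)) (\<lambda>n r. g (r # n # tl xs)) (hd0 xs))"
| mini: "total_recursive g \<Longrightarrow> (\<forall>xs. \<exists>y. g (y # xs) = 0) \<Longrightarrow>
         total_recursive (\<lambda>xs. LEAST y. g (y # xs) = 0)"

definition computable1 :: "(nat \<Rightarrow> nat) \<Rightarrow> bool" where
  "computable1 f \<longleftrightarrow> total_recursive (\<lambda>xs. f (arg 0 xs))"

definition computable2 :: "(nat \<Rightarrow> nat \<Rightarrow> nat) \<Rightarrow> bool" where
  "computable2 f \<longleftrightarrow> total_recursive (\<lambda>xs. f (arg 0 xs) (arg 1 xs))"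

definition computable3 :: "(nat \<Rightarrow> nat \<Rightarrow> nat \<Rightarrow> nat) \<Rightarrow> bool" where
  "computable3 f \<longleftrightarrow> total_recursive (\<lambda>xs. f (arg 0 xs) (arg 1 xs) (arg 2 xs))"

definition computable_real2 :: "(nat \<Rightarrow> nat \<Rightarrow> real) \<Rightarrow> bool" where
  "computable_real2 r \<longleftrightarrow> (\<exists>a b c. computable3 a \<and> computable3 b \<and> computable3 c \<and>
     (\<forall>i j k. \<bar>r i j - (real (a i j k) - real (b i j k)) / (real (c i j k) + 1)\<bar> < (1/2) ^ k))"

definition computable_metric_space :: "'a set \<Rightarrow> ('a \<Rightarrow> 'a \<Rightarrow> real) \<Rightarrow> (nat \<Rightarrow> 'a) \<Rightarrow> bool" where
  "computable_metric_space X d \<alpha> \<longleftrightarrow> Metric_space X d \<and> range \<alpha> \<subseteq> X \<and>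
     (\<forall>x\<in>X. \<forall>e>0. \<exists>i. d x (\<alpha> i) < e) \<and>
     computable_real2 (\<lambda>i j. d (\<alpha> i) (\<alpha> j))"

definition seq_enum :: "(nat \<Rightarrow> nat \<Rightarrow> nat) \<Rightarrow> (nat \<Rightarrow> nat) \<Rightarrow> bool" where
  "seq_enum \<sigma> \<eta> \<longleftrightarrow> computable2 \<sigma> \<and> computable1 \<eta> \<and>
     {map (\<sigma> j) [0..<Suc (\<eta> j)] | j. True} = {xs. xs \<noteq> []}"

definition Lambda :: "(nat \<Rightarrow> 'a) \<Rightarrow> (nat \<Rightarrow> nat \<Rightarrow> nat) \<Rightarrow> (nat \<Rightarrow> nat) \<Rightarrow> nat \<Rightarrow> 'a set" where
  "Lambda \<alpha> \<sigma> \<eta> j = {\<alpha> (\<sigma> j i) | i. i \<le> \<eta> j}"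

definition prec :: "('a \<Rightarrow> 'a \<Rightarrow> real) \<Rightarrow> 'a set \<Rightarrow> 'a set \<Rightarrow> real \<Rightarrow> bool" where
  "prec d A B \<epsilon> \<longleftrightarrow> (\<forall>a\<in>A. \<exists>b\<in>B. d a b < \<epsilon>)"

definition computable_up_to ::
  "('a \<Rightarrow> 'a \<Rightarrow> real) \<Rightarrow> (nat \<Rightarrow> 'a) \<Rightarrow> (nat \<Rightarrow> nat \<Rightarrow> nat) \<Rightarrow> (nat \<Rightarrow> nat) \<Rightarrow> 'a set \<Rightarrow> 'a set \<Rightarrow> bool" where
  "computable_up_to d \<alpha> \<sigma> \<eta> A S \<longleftrightarrow> (\<exists>f. computable1 f \<and>
     (\<forall>k. prec d A (Lambda \<alpha> \<sigma> \<eta> (f k)) ((1/2) ^ k) \<and>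
          prec d (Lambda \<alpha> \<sigma> \<eta> (f k)) S ((1/2) ^ k)))"

end

theory Submission
  imports Defs
begin

text \<open>If \<open>f k\<close> and \<open>g k\<close> code finite sets that approximate \<open>A\<close> and \<open>B\<close> to within \<open>2^-k\<close>, then a code of
  the concatenation of the two coded sequences approximates \<open>A \<union> B\<close> equally well. Such a code
  exists because \<open>\<sigma>, \<eta>\<close> enumerate all nonempty sequences, and the least one is found by
  minimization over a recursive test, so it depends computably on \<open>f k\<close> and \<open>g k\<close>.\<close>

lemma arg_Cons_0 [simp]: "arg 0 (x # xs) = x"
  and arg_Cons_Suc [simp]: "arg (Suc i) (x # xs) = arg i xs"
  and arg_Cons_1 [simp]: "arg 1 (x # xs) = arg 0 xs"
  and arg_Cons_2 [simp]: "arg 2 (x # xs) = arg 1 xs"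
  and arg_Cons_3 [simp]: "arg 3 (x # xs) = arg 2 xs"
  and hd0_eq_arg_0 [simp]: "hd0 xs = arg 0 xs"
  by (cases xs; simp add: arg_def hd0_def numeral_eq_Suc)+

lemma arg_tl: "arg i (tl xs) = arg (Suc i) xs"
  by (cases xs) (simp_all add: arg_def nth_tl)

lemma total_recursive_comp1:
  assumes "total_recursive (\<lambda>xs. u (arg 0 xs))" "total_recursive F"
  shows "total_recursive (\<lambda>xs. u (F xs))"
  using total_recursive.comp[OF assms(1), of "[F]"] assms(2) by simp

lemma total_recursive_comp2:
  assumes "total_recursive (\<lambda>xs. u (arg 0 xs) (arg 1 xs))" "total_recursive F" "total_recursive G"
  shows "total_recursive (\<lambda>xs. u (F xs) (G xs))"
  using total_recursive.comp[OF assms(1), of "[F, G]"] assms(2,3) by simp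

lemma total_recursive_computable1:
  "computable1 f \<Longrightarrow> total_recursive F \<Longrightarrow> total_recursive (\<lambda>xs. f (F xs))"
  unfolding computable1_def by (rule total_recursive_comp1)

lemma total_recursive_computable2:
  "computable2 f \<Longrightarrow> total_recursive F \<Longrightarrow> total_recursive G \<Longrightarrow> total_recursive (\<lambda>xs. f (F xs) (G xs))"
  unfolding computable2_def by (rule total_recursive_comp2)

lemma computable1_compose2:
  assumes "computable2 c" "computable1 f" "computable1 g"
  shows "computable1 (\<lambda>k. c (f k) (g k))"
  unfolding computable1_def
  using assms(2,3) by (intro total_recursive_computable2[OF assms(1)]) (simp_all add: computable1_def)

lemma total_recursive_Suc: "total_recursive F \<Longrightarrow> total_recursive (\<lambda>xs. Suc (F xs))"
  using total_recursive_comp1[of Suc] total_recursive.succ by simp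

lemma total_recursive_add:
  assumes "total_recursive F" "total_recursive G"
  shows "total_recursive (\<lambda>xs. F xs + G xs)"
proof -
  have prim: "total_recursive (\<lambda>xs. rec_nat (arg 0 (tl xs)) (\<lambda>n r. Suc (hd0 (r # n # tl xs))) (hd0 xs))"
    by (rule total_recursive.prim[OF total_recursive.proj total_recursive.succ])
  have rec: "rec_nat y (\<lambda>n r. Suc r) x = x + y" for x y :: nat
    by (induct x) auto
  show ?thesis
    using total_recursive.comp[OF prim, of "[F, G]"] assms by (simp add: rec)
qed

lemma total_recursive_diff:
  assumes "total_recursive F" "total_recursive G"
  shows "total_recursive (\<lambda>xs. F xs - G xs)"
proof -
  have "total_recursive (\<lambda>xs. rec_nat ((\<lambda>_. 0) (tl xs)) (\<lambda>n r. arg 1 (r # n # tl xs)) (hd0 xs))"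
    by (rule total_recursive.prim[OF total_recursive.zero total_recursive.proj])
  moreover have "rec_nat 0 (\<lambda>n r. n) x = x - 1" for x :: nat
    by (induct x) auto
  ultimately have pred: "total_recursive (\<lambda>xs. arg 0 xs - 1)"
    by simp
  have prim: "total_recursive (\<lambda>xs. rec_nat (arg 0 (tl xs)) (\<lambda>n r. (\<lambda>ys. arg 0 ys - 1) (r # n # tl xs)) (hd0 xs))"
    by (rule total_recursive.prim[OF total_recursive.proj pred])
  have rec: "rec_nat x (\<lambda>n r. r - 1) y = x - y" for x y :: nat
    by (induct y) auto
  show ?thesis
    using total_recursive.comp[OF prim, of "[G, F]"] assms by (simp add: rec[simplified])
qed

lemma total_recursive_if_le:
  assumes "total_recursive I" "total_recursive N" "total_recursive F" "total_recursive G"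
  shows "total_recursive (\<lambda>xs. if I xs \<le> N xs then F xs else G xs)"
proof -
  have prim: "total_recursive (\<lambda>xs. rec_nat (arg 0 (tl xs)) (\<lambda>n r. arg 3 (r # n # tl xs)) (hd0 xs))"
    by (rule total_recursive.prim[OF total_recursive.proj total_recursive.proj])
  have rec: "rec_nat x (\<lambda>n r. y) m = (if m = 0 then x else y)" for m x y :: nat
    by (cases m) auto
  show ?thesis
    using total_recursive.comp[OF prim, of "[\<lambda>xs. I xs - N xs, F, G]"] total_recursive_diff[OF assms(1,2)]
      assms(3,4) by (simp add: rec)
qed

lemma total_recursive_sum_lessThan:
  assumes "total_recursive (\<lambda>ys. D (arg 1 ys) (tl (tl ys)))"
  shows "total_recursive (\<lambda>xs. \<Sum>i<hd0 xs. D i (tl xs))"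
proof -
  have "total_recursive (\<lambda>xs. rec_nat ((\<lambda>_. 0) (tl xs))
      (\<lambda>n r. (\<lambda>ys. arg 0 ys + D (arg 1 ys) (tl (tl ys))) (r # n # tl xs)) (hd0 xs))"
    by (intro total_recursive.prim total_recursive.zero total_recursive_add total_recursive.proj assms)
  moreover have "rec_nat 0 (\<lambda>n r. r + h n) m = (\<Sum>i<m. h i)" for m and h :: "nat \<Rightarrow> nat"
    by (induct m) auto
  ultimately show ?thesis
    by simp
qed

definition nat_dist :: "nat \<Rightarrow> nat \<Rightarrow> nat" where
  "nat_dist x y = (x - y) + (y - x)"

lemma nat_dist_eq_0_iff [simp]: "nat_dist x y = 0 \<longleftrightarrow> x = y"
  unfolding nat_dist_def by linarith

lemma total_recursive_nat_dist:
  "total_recursive F \<Longrightarrow> total_recursive G \<Longrightarrow> total_recursive (\<lambda>xs. nat_dist (F xs) (G xs))"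
  unfolding nat_dist_def by (intro total_recursive_add total_recursive_diff)

definition concat_entry :: "(nat \<Rightarrow> nat \<Rightarrow> nat) \<Rightarrow> (nat \<Rightarrow> nat) \<Rightarrow> nat \<Rightarrow> nat \<Rightarrow> nat \<Rightarrow> nat" where
  "concat_entry \<sigma> \<eta> a b i = (if i \<le> \<eta> a then \<sigma> a i else \<sigma> b (i - Suc (\<eta> a)))"

definition concat_defect :: "(nat \<Rightarrow> nat \<Rightarrow> nat) \<Rightarrow> (nat \<Rightarrow> nat) \<Rightarrow> nat \<Rightarrow> nat \<Rightarrow> nat \<Rightarrow> nat" where
  "concat_defect \<sigma> \<eta> j a b = nat_dist (\<eta> j) (Suc (\<eta> a + \<eta> b))
     + (\<Sum>i<Suc (\<eta> j). nat_dist (\<sigma> j i) (concat_entry \<sigma> \<eta> a b i))"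

definition concat_code :: "(nat \<Rightarrow> nat \<Rightarrow> nat) \<Rightarrow> (nat \<Rightarrow> nat) \<Rightarrow> nat \<Rightarrow> nat \<Rightarrow> nat" where
  "concat_code \<sigma> \<eta> a b = (LEAST j. concat_defect \<sigma> \<eta> j a b = 0)"

lemma concat_defect_eq_0_iff:
  "concat_defect \<sigma> \<eta> j a b = 0 \<longleftrightarrow>
     \<eta> j = Suc (\<eta> a + \<eta> b) \<and> (\<forall>i\<le>\<eta> j. \<sigma> j i = concat_entry \<sigma> \<eta> a b i)"
  unfolding concat_defect_def by (auto simp: lessThan_Suc_atMost)

lemma total_recursive_concat_defect:
  assumes "computable1 \<eta>" "computable2 \<sigma>"
  shows "total_recursive (\<lambda>xs. concat_defect \<sigma> \<eta> (arg 0 xs) (arg 1 xs) (arg 2 xs))"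
proof -
  let ?D = "\<lambda>i zs. nat_dist (\<sigma> (arg 0 zs) i) (concat_entry \<sigma> \<eta> (arg 1 zs) (arg 2 zs) i)"
  have "total_recursive (\<lambda>ys. ?D (arg 1 ys) (tl (tl ys)))"
    unfolding concat_entry_def arg_tl
    by (intro total_recursive_nat_dist total_recursive_if_le total_recursive_diff total_recursive_Suc
        total_recursive_computable1[OF assms(1)] total_recursive_computable2[OF assms(2)] total_recursive.proj)
  then have sum: "total_recursive (\<lambda>xs. \<Sum>i<hd0 xs. ?D i (tl xs))"
    by (rule total_recursive_sum_lessThan)
  have "total_recursive (\<lambda>xs. Suc (\<eta> (arg 0 xs)))"
    using assms(1) unfolding computable1_def by (rule total_recursive_Suc)
  then have "total_recursive (\<lambda>xs. (\<lambda>zs. \<Sum>i<hd0 zs. ?D i (tl zs))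
      (map (\<lambda>g. g xs) [\<lambda>xs. Suc (\<eta> (arg 0 xs)), arg 0, arg 1, arg 2]))"
    by (intro total_recursive.comp[OF sum]) (auto intro: total_recursive.proj)
  then have "total_recursive (\<lambda>xs. nat_dist (\<eta> (arg 0 xs)) (Suc (\<eta> (arg 1 xs) + \<eta> (arg 2 xs)))
      + (\<Sum>i<Suc (\<eta> (arg 0 xs)). ?D i [arg 0 xs, arg 1 xs, arg 2 xs]))"
    by (intro total_recursive_add total_recursive_nat_dist total_recursive_Suc
        total_recursive_computable1[OF assms(1)] total_recursive.proj) simp_all
  then show ?thesis
    unfolding concat_defect_def by simp
qed

lemma concat_defect_eq_0_exists:
  assumes "seq_enum \<sigma> \<eta>"
  shows "\<exists>j. concat_defect \<sigma> \<eta> j a b = 0"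
proof -
  define L where "L = map (\<sigma> a) [0..<Suc (\<eta> a)] @ map (\<sigma> b) [0..<Suc (\<eta> b)]"
  have enum: "{map (\<sigma> j) [0..<Suc (\<eta> j)] | j. True} = {xs. xs \<noteq> []}"
    using assms unfolding seq_enum_def by (elim conjE)
  have "L \<in> {xs. xs \<noteq> []}"
    by (simp add: L_def del: upt_Suc)
  then obtain j where j: "map (\<sigma> j) [0..<Suc (\<eta> j)] = L"
    unfolding enum[symmetric] by blast
  then have "length (map (\<sigma> j) [0..<Suc (\<eta> j)]) = length L"
    by (rule arg_cong)
  then have len: "\<eta> j = Suc (\<eta> a + \<eta> b)"
    by (simp add: L_def del: upt_Suc)
  have "\<sigma> j i = concat_entry \<sigma> \<eta> a b i" if "i \<le> \<eta> j" for i
  proof -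
    have "\<sigma> j i = L ! i"
      using that by (simp flip: j del: upt_Suc)
    also have "\<dots> = concat_entry \<sigma> \<eta> a b i"
      using that len by (simp add: L_def nth_append concat_entry_def del: upt_Suc)
    finally show ?thesis .
  qed
  with len show ?thesis
    by (auto simp: concat_defect_eq_0_iff)
qed

lemma concat_defect_concat_code:
  "seq_enum \<sigma> \<eta> \<Longrightarrow> concat_defect \<sigma> \<eta> (concat_code \<sigma> \<eta> a b) a b = 0"
  unfolding concat_code_def by (rule LeastI_ex) (rule concat_defect_eq_0_exists)

lemma computable2_concat_code:
  assumes "seq_enum \<sigma> \<eta>"
  shows "computable2 (concat_code \<sigma> \<eta>)"
proof -
  have "computable1 \<eta>" "computable2 \<sigma>"
    using assms by (auto simp: seq_enum_def)
  then have "total_recursive (\<lambda>ys. concat_defect \<sigma> \<eta> (arg 0 ys) (arg 1 ys) (arg 2 ys))"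
    by (rule total_recursive_concat_defect)
  then have "total_recursive (\<lambda>xs. LEAST j. concat_defect \<sigma> \<eta> (arg 0 (j # xs)) (arg 1 (j # xs)) (arg 2 (j # xs)) = 0)"
    by (rule total_recursive.mini) (simp add: concat_defect_eq_0_exists[OF assms])
  then show ?thesis
    by (simp add: computable2_def concat_code_def)
qed

lemma Lambda_eq_image: "Lambda \<alpha> \<sigma> \<eta> j = \<alpha> ` \<sigma> j ` {..\<eta> j}"
  unfolding Lambda_def by auto

lemma Lambda_eq_Un_if_concat_defect_eq_0:
  assumes "concat_defect \<sigma> \<eta> j a b = 0"
  shows "Lambda \<alpha> \<sigma> \<eta> j = Lambda \<alpha> \<sigma> \<eta> a \<union> Lambda \<alpha> \<sigma> \<eta> b"
proof -
  from assms have len: "\<eta> j = Suc (\<eta> a + \<eta> b)"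
    and entry: "\<And>i. i \<le> \<eta> j \<Longrightarrow> \<sigma> j i = concat_entry \<sigma> \<eta> a b i"
    by (auto simp: concat_defect_eq_0_iff)
  have "\<sigma> j ` {..\<eta> j} = \<sigma> a ` {..\<eta> a} \<union> \<sigma> b ` {..\<eta> b}"
  proof (intro equalityI subsetI)
    fix x assume "x \<in> \<sigma> j ` {..\<eta> j}"
    then obtain i where "i \<le> \<eta> j" "x = \<sigma> j i" by blast
    with len entry[of i] show "x \<in> \<sigma> a ` {..\<eta> a} \<union> \<sigma> b ` {..\<eta> b}"
      by (cases "i \<le> \<eta> a") (auto simp: concat_entry_def)
  next
    fix x assume "x \<in> \<sigma> a ` {..\<eta> a} \<union> \<sigma> b ` {..\<eta> b}"
    then consider i where "i \<le> \<eta> a" "x = \<sigma> a i" | i where "i \<le> \<eta> b" "x = \<sigma> b i"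
      by blast
    then show "x \<in> \<sigma> j ` {..\<eta> j}"
    proof cases
      case (1 i)
      with len entry[of i] show ?thesis
        by (auto simp: concat_entry_def intro!: image_eqI[of _ _ i])
    next
      case (2 i)
      with len entry[of "Suc (\<eta> a) + i"] show ?thesis
        by (auto simp: concat_entry_def intro!: image_eqI[of _ _ "Suc (\<eta> a) + i"])
    qed
  qed
  then show ?thesis
    by (simp add: Lambda_eq_image image_Un)
qed

lemma Lambda_concat_code:
  "seq_enum \<sigma> \<eta> \<Longrightarrow> Lambda \<alpha> \<sigma> \<eta> (concat_code \<sigma> \<eta> a b) = Lambda \<alpha> \<sigma> \<eta> a \<union> Lambda \<alpha> \<sigma> \<eta> b"
  by (rule Lambda_eq_Un_if_concat_defect_eq_0) (rule concat_defect_concat_code)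

lemma prec_Un_Un: "prec d A L \<epsilon> \<Longrightarrow> prec d B M \<epsilon> \<Longrightarrow> prec d (A \<union> B) (L \<union> M) \<epsilon>"
  unfolding prec_def by blast

lemma prec_UnI: "prec d L S \<epsilon> \<Longrightarrow> prec d M S \<epsilon> \<Longrightarrow> prec d (L \<union> M) S \<epsilon>"
  unfolding prec_def by blast

lemma computable_up_to_Un:
  assumes "seq_enum \<sigma> \<eta>"
    and "computable_up_to d \<alpha> \<sigma> \<eta> A S" "computable_up_to d \<alpha> \<sigma> \<eta> B S"
  shows "computable_up_to d \<alpha> \<sigma> \<eta> (A \<union> B) S"
proof -
  obtain f where f: "computable1 f" "\<And>k. prec d A (Lambda \<alpha> \<sigma> \<eta> (f k)) ((1/2) ^ k)"
    "\<And>k. prec d (Lambda \<alpha> \<sigma> \<eta> (f k)) S ((1/2) ^ k)"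
    using assms(2) unfolding computable_up_to_def by blast
  obtain g where g: "computable1 g" "\<And>k. prec d B (Lambda \<alpha> \<sigma> \<eta> (g k)) ((1/2) ^ k)"
    "\<And>k. prec d (Lambda \<alpha> \<sigma> \<eta> (g k)) S ((1/2) ^ k)"
    using assms(3) unfolding computable_up_to_def by blast
  let ?h = "\<lambda>k. concat_code \<sigma> \<eta> (f k) (g k)"
  have h: "Lambda \<alpha> \<sigma> \<eta> (?h k) = Lambda \<alpha> \<sigma> \<eta> (f k) \<union> Lambda \<alpha> \<sigma> \<eta> (g k)" for k
    using assms(1) by (rule Lambda_concat_code)
  show ?thesis
    unfolding computable_up_to_def
  proof (intro exI[of _ ?h] conjI allI)
    show "computable1 ?h"
      using computable2_concat_code[OF assms(1)] f(1) g(1) by (rule computable1_compose2)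
    fix k
    show "prec d (A \<union> B) (Lambda \<alpha> \<sigma> \<eta> (?h k)) ((1/2) ^ k)"
      unfolding h by (rule prec_Un_Un[OF f(2) g(2)])
    show "prec d (Lambda \<alpha> \<sigma> \<eta> (?h k)) S ((1/2) ^ k)"
      unfolding h by (rule prec_UnI[OF f(3) g(3)])
  qed
qed

theorem proposition4p1:
  fixes X :: "'a set" and d :: "'a \<Rightarrow> 'a \<Rightarrow> real" and \<alpha> :: "nat \<Rightarrow> 'a"
    and \<sigma> :: "nat \<Rightarrow> nat \<Rightarrow> nat" and \<eta> :: "nat \<Rightarrow> nat" and A B S :: "'a set"
  assumes "computable_metric_space X d \<alpha>"
    and "seq_enum \<sigma> \<eta>"
    and "S \<subseteq> X" and "A \<subseteq> S" and "B \<subseteq> S"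
    and "computable_up_to d \<alpha> \<sigma> \<eta> A S"
    and "computable_up_to d \<alpha> \<sigma> \<eta> B S"
  shows "computable_up_to d \<alpha> \<sigma> \<eta> (A \<union> B) S"
  using assms(2,6,7) by (rule computable_up_to_Un)

end
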